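(* Let $F, F'$ be minimally unsatisfiable clause-sets with $F \to^{*}_{\mathrm{sDP}} F'$. Then $\mathrm{minvdeg}(F') \ge \mathrm{minvdeg}(F)$.
   Context: Literals come with a fixed-point-free involution $x \mapsto \overline{x}$; variables are positive literals. A clause is a finite set $C$ of literals with $C \cap \overline{C} = \emptyset$; a clause-set is a finite set of clauses. A clause-set is minimally unsatisfiable if it is unsatisfiable but becomes satisfiable upon removing any clause. $\mathrm{ld}_F(x)$ is the number of clauses of $F$ containing literal $x$; $\mathrm{vdeg}_F(v) = \mathrm{ld}_F(v) + \mathrm{ld}_F(\overline{v})$; $\mathrm{minvdeg}(F) = \min_{v \in \mathrm{var}(F)} \mathrm{vdeg}_F(v)$ if $F$ has variables, and $+\infty$ otherwise. A variable $v$ is singular in $F$ if $\min(\mathrm{ld}_F(v), \mathrm{ld}_F(\overline{v})) = 1$. DP-reduction on $v$: $\mathrm{DP}_v(F) = \{C \in F : v \notin \mathrm{var}(C)\} \cup \{(C \cup D) \setminus \{v, \overline{v}\} : C, D \in F,\ C \cap \overline{D} = \{v\}\}$. $F \to_{\mathrm{sDP}} F'$ holds if $F' = \mathrm{DP}_v(F)$ for some singular variable $v$ of $F$; $\to^{*}_{\mathrm{sDP}}$ is its reflexive-transitive closure. *)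

theory Defs
  imports Main "HOL-Library.Extended_Nat"
begin

datatype 'v lit = Pos 'v | Neg 'v

fun comp :: "'v lit \<Rightarrow> 'v lit" where
  "comp (Pos v) = Neg v"
| "comp (Neg v) = Pos v"

fun var_of :: "'v lit \<Rightarrow> 'v" where
  "var_of (Pos v) = v"
| "var_of (Neg v) = v"

type_synonym 'v clause = "'v lit set"
type_synonym 'v cls = "'v lit set set"

definition comp_set :: "'v clause \<Rightarrow> 'v clause" where
  "comp_set C = comp ` C"

definition is_clause :: "'v clause \<Rightarrow> bool" where
  "is_clause C \<longleftrightarrow> finite C \<and> C \<inter> comp_set C = {}"

definition is_clause_set :: "'v cls \<Rightarrow> bool" where
  "is_clause_set F \<longleftrightarrow> finite F \<and> (\<forall>C\<in>F. is_clause C)"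

definition vars_cl :: "'v clause \<Rightarrow> 'v set" where
  "vars_cl C = var_of ` C"

definition vars :: "'v cls \<Rightarrow> 'v set" where
  "vars F = (\<Union>C\<in>F. vars_cl C)"

fun lit_val :: "('v \<Rightarrow> bool) \<Rightarrow> 'v lit \<Rightarrow> bool" where
  "lit_val \<phi> (Pos v) = \<phi> v"
| "lit_val \<phi> (Neg v) = (\<not> \<phi> v)"

definition satisfiable :: "'v cls \<Rightarrow> bool" where
  "satisfiable F \<longleftrightarrow> (\<exists>\<phi>. \<forall>C\<in>F. \<exists>x\<in>C. lit_val \<phi> x)"

definition minimally_unsat :: "'v cls \<Rightarrow> bool" where
  "minimally_unsat F \<longleftrightarrow> is_clause_set F \<and> \<not> satisfiable F \<and>
     (\<forall>C\<in>F. satisfiable (F - {C}))"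

definition ld :: "'v cls \<Rightarrow> 'v lit \<Rightarrow> nat" where
  "ld F x = card {C\<in>F. x \<in> C}"

definition vdeg :: "'v cls \<Rightarrow> 'v \<Rightarrow> nat" where
  "vdeg F v = ld F (Pos v) + ld F (Neg v)"

definition minvdeg :: "'v cls \<Rightarrow> enat" where
  "minvdeg F = (if vars F = {} then \<infinity> else enat (Min (vdeg F ` vars F)))"

definition singular :: "'v cls \<Rightarrow> 'v \<Rightarrow> bool" where
  "singular F v \<longleftrightarrow> v \<in> vars F \<and> min (ld F (Pos v)) (ld F (Neg v)) = 1"

definition DP :: "'v \<Rightarrow> 'v cls \<Rightarrow> 'v cls" where
  "DP v F = {C\<in>F. v \<notin> vars_cl C} \<union>
     {(C \<union> D) - {Pos v, Neg v} | C D. C \<in> F \<and> D \<in> F \<and> C \<inter> comp_set D = {Pos v}}"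

definition sDP_step :: "'v cls \<Rightarrow> 'v cls \<Rightarrow> bool" where
  "sDP_step F F' \<longleftrightarrow> (\<exists>v. singular F v \<and> F' = DP v F)"

end

theory Submission
  imports Defs
begin

text \<open>Let \<open>p\<close> occur in exactly one clause \<open>C\<^sub>0\<close> of the minimally unsatisfiable \<open>F\<close>,
and let \<open>N\<close> be the clauses containing \<open>\<not>p\<close>. An assignment satisfying \<open>F - {D}\<close> for \<open>D \<in> N\<close>
falsifies the whole resolvent of \<open>C\<^sub>0\<close> and \<open>D\<close>, since otherwise setting \<open>p\<close> to false would
satisfy \<open>F\<close>. Hence the resolvents are non-tautological, pairwise distinct and new, and
\<open>DP\<^sub>p(F)\<close> is again minimally unsatisfiable. Literals of other variables keep their occurrences,
except that a literal \<open>x \<in> C\<^sub>0\<close> now occurs in all \<open>|N|\<close> resolvents instead of in \<open>C\<^sub>0\<close> and in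
the clauses of \<open>N\<close> containing it. So its count can only drop if \<open>x\<close> lies in every clause of \<open>N\<close>;
then \<open>\<not>x\<close>, which must occur somewhere as \<open>F\<close> has no pure literals, occurs in an untouched
clause, and the degree of the variable of \<open>x\<close> is at least \<open>1 + |N|\<close>, the degree of the
eliminated variable.\<close>

lemma comp_comp [simp]: "comp (comp x) = x"
  by (cases x) auto

lemma var_of_comp [simp]: "var_of (comp x) = var_of x"
  by (cases x) auto

lemma lit_val_comp [simp]: "lit_val \<phi> (comp x) \<longleftrightarrow> \<not> lit_val \<phi> x"
  by (cases x) auto

lemma var_of_eq_iff: "var_of z = var_of x \<longleftrightarrow> z = x \<or> z = comp x"
  by (cases x; cases z) auto

lemma mem_comp_set_iff: "y \<in> comp_set D \<longleftrightarrow> comp y \<in> D"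
  unfolding comp_set_def by (metis comp_comp image_iff)

lemma comp_set_singleton [simp]: "comp_set {x} = {comp x}"
  unfolding comp_set_def by simp

lemma clause_comp_notin: "is_clause C \<Longrightarrow> x \<in> C \<Longrightarrow> comp x \<notin> C"
  unfolding is_clause_def by (auto simp: mem_comp_set_iff)

lemma comp_set_comp_set [simp]: "comp_set (comp_set A) = A"
  by (auto simp: mem_comp_set_iff)

lemma clash_swap: "C \<inter> comp_set D = {x} \<longleftrightarrow> D \<inter> comp_set C = {comp x}"
proof -
  have "D \<inter> comp_set C = comp_set (C \<inter> comp_set D)"
    by (auto simp: mem_comp_set_iff)
  then show ?thesis
    by (metis comp_set_comp_set comp_set_singleton)
qed

lemma var_of_in_vars_cl: "x \<in> C \<Longrightarrow> var_of x \<in> vars_cl C"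
  unfolding vars_cl_def by simp

lemma var_of_in_vars: "C \<in> F \<Longrightarrow> x \<in> C \<Longrightarrow> var_of x \<in> vars F"
  unfolding vars_def vars_cl_def by blast

lemma DP_lit:
  fixes x :: "'v lit"
  shows "DP (var_of x) F = {C\<in>F. var_of x \<notin> vars_cl C} \<union>
     {(C \<union> D) - {x, comp x} | C D. C \<in> F \<and> D \<in> F \<and> C \<inter> comp_set D = {x}}"
proof (cases x)
  case (Neg v)
  have "C \<inter> comp_set D = {Pos v} \<longleftrightarrow> D \<inter> comp_set C = {Neg v}" for C D :: "'v clause"
    using clash_swap[of C D "Pos v"] by simp
  then show ?thesis
    unfolding DP_def Neg by (auto simp: insert_commute Un_commute)
qed (simp add: DP_def)

abbreviation models :: "('v \<Rightarrow> bool) \<Rightarrow> 'v cls \<Rightarrow> bool" where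
  "models \<phi> F \<equiv> \<forall>C\<in>F. \<exists>x\<in>C. lit_val \<phi> x"

lemma satisfiable_by_setting_lit:
  assumes "\<forall>C\<in>F. x \<in> C \<or> (\<exists>z\<in>C. var_of z \<noteq> var_of x \<and> lit_val \<phi> z)"
  shows "satisfiable F"
proof -
  define \<psi> where "\<psi> = \<phi>(var_of x := (case x of Pos _ \<Rightarrow> True | Neg _ \<Rightarrow> False))"
  have "lit_val \<psi> x"
    by (cases x) (simp_all add: \<psi>_def)
  moreover have "lit_val \<psi> z = lit_val \<phi> z" if "var_of z \<noteq> var_of x" for z
    using that by (cases z) (simp_all add: \<psi>_def)
  ultimately have "models \<psi> F"
    using assms by metis
  then show ?thesis
    unfolding satisfiable_def by blast
qed

lemma minimally_unsat_remove_models: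
  assumes "minimally_unsat F" "D \<in> F"
  obtains \<phi> where "models \<phi> (F - {D})"
  using assms unfolding minimally_unsat_def satisfiable_def by blast

lemma unsat_remove_models_falsifies:
  assumes "\<not> satisfiable F" "models \<phi> (F - {D})" "z \<in> D"
  shows "\<not> lit_val \<phi> z"
  using assms unfolding satisfiable_def by blast

lemma minimally_unsat_comp_occurs:
  assumes mu: "minimally_unsat F" and "C \<in> F" "x \<in> C"
  shows "\<exists>C'\<in>F. comp x \<in> C'"
proof (rule ccontr)
  assume no_comp: "\<not> (\<exists>C'\<in>F. comp x \<in> C')"
  obtain \<phi> where \<phi>: "models \<phi> (F - {C})"
    using minimally_unsat_remove_models[OF mu \<open>C \<in> F\<close>] .
  have "\<forall>E\<in>F. x \<in> E \<or> (\<exists>z\<in>E. var_of z \<noteq> var_of x \<and> lit_val \<phi> z)"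
  proof
    fix E assume "E \<in> F"
    show "x \<in> E \<or> (\<exists>z\<in>E. var_of z \<noteq> var_of x \<and> lit_val \<phi> z)"
    proof (cases "x \<in> E")
      case False
      with \<phi> \<open>E \<in> F\<close> \<open>x \<in> C\<close> obtain z where "z \<in> E" "lit_val \<phi> z"
        by blast
      moreover have "z \<noteq> x" "z \<noteq> comp x"
        using \<open>z \<in> E\<close> False no_comp \<open>E \<in> F\<close> by auto
      ultimately show ?thesis
        by (auto simp: var_of_eq_iff)
    qed simp
  qed
  then have "satisfiable F"
    by (rule satisfiable_by_setting_lit)
  with mu show False
    unfolding minimally_unsat_def by blast
qed

locale singular_lit =
  fixes F :: "'v cls" and C0 :: "'v clause" and p :: "'v lit"
  assumes mu: "minimally_unsat F"
    and occurrences_p: "{C\<in>F. p \<in> C} = {C0}"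
begin

abbreviation "N \<equiv> {D\<in>F. comp p \<in> D}"
abbreviation "K \<equiv> {C\<in>F. var_of p \<notin> vars_cl C}"
abbreviation "res D \<equiv> (C0 \<union> D) - {p, comp p}"
abbreviation "G \<equiv> K \<union> res ` N"

lemma C0_in_F: "C0 \<in> F" and p_in_C0: "p \<in> C0"
  using occurrences_p by auto

lemma eq_C0_if_p_in: "C \<in> F \<Longrightarrow> p \<in> C \<Longrightarrow> C = C0"
  using occurrences_p by auto

lemma unsat: "\<not> satisfiable F"
  using mu unfolding minimally_unsat_def by blast

lemma finite_F: "finite F" and clause_F: "C \<in> F \<Longrightarrow> is_clause C"
  using mu unfolding minimally_unsat_def is_clause_set_def by auto

lemma comp_p_notin_C0: "comp p \<notin> C0"
  using clause_comp_notin[OF clause_F[OF C0_in_F] p_in_C0] .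

lemma p_notin_N: "D \<in> N \<Longrightarrow> p \<notin> D"
  using clause_comp_notin[OF clause_F, of D "comp p"] by auto

lemma clause_cases:
  assumes "C \<in> F" shows "C \<in> K \<or> C = C0 \<or> C \<in> N"
proof (cases "var_of p \<in> vars_cl C")
  case True
  then obtain z where "z \<in> C" "var_of z = var_of p"
    unfolding vars_cl_def by auto
  then show ?thesis
    using assms eq_C0_if_p_in by (auto simp: var_of_eq_iff)
qed (simp add: assms)

lemma var_of_K: "C \<in> K \<Longrightarrow> z \<in> C \<Longrightarrow> var_of z \<noteq> var_of p"
  using var_of_in_vars_cl by fastforce

lemma C0_notin_K: "C0 \<notin> K"
  using var_of_in_vars_cl[OF p_in_C0] by auto

lemma K_N_disjoint: "C \<in> K \<Longrightarrow> C \<notin> N"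
  using var_of_in_vars_cl[of "comp p"] by force

lemma satisfiable_if_K_and_C0_rest_true:
  assumes "\<forall>C\<in>K. \<exists>y\<in>C. lit_val \<phi> y" and "z \<in> C0" "z \<noteq> p" "lit_val \<phi> z"
  shows "satisfiable F"
proof (rule satisfiable_by_setting_lit, intro ballI)
  fix C assume "C \<in> F"
  have "var_of z \<noteq> var_of p"
    using assms(2,3) comp_p_notin_C0 by (auto simp: var_of_eq_iff)
  with clause_cases[OF \<open>C \<in> F\<close>] assms var_of_K
  show "comp p \<in> C \<or> (\<exists>y\<in>C. var_of y \<noteq> var_of (comp p) \<and> lit_val \<phi> y)"
    by (metis (no_types, lifting) mem_Collect_eq var_of_comp)
qed

lemma satisfiable_if_K_and_N_rest_true:
  assumes "\<forall>C\<in>K. \<exists>y\<in>C. lit_val \<phi> y" and "\<forall>D\<in>N. \<exists>y\<in>D. y \<noteq> comp p \<and> lit_val \<phi> y"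
  shows "satisfiable F"
proof (rule satisfiable_by_setting_lit, intro ballI)
  fix C assume "C \<in> F"
  consider "C \<in> K" | "C = C0" | "C \<in> N"
    using clause_cases[OF \<open>C \<in> F\<close>] by blast
  then show "p \<in> C \<or> (\<exists>y\<in>C. var_of y \<noteq> var_of p \<and> lit_val \<phi> y)"
  proof cases
    case 1
    then show ?thesis
      using assms(1) var_of_K by blast
  next
    case 2
    then show ?thesis
      using p_in_C0 by blast
  next
    case 3
    then obtain y where "y \<in> C" "y \<noteq> comp p" "lit_val \<phi> y"
      using assms(2) by blast
    moreover have "y \<noteq> p"
      using p_notin_N[OF 3] \<open>y \<in> C\<close> by blast
    ultimately show ?thesis
      by (auto simp: var_of_eq_iff)
  qed
qed

text \<open>The key property of singular DP-reduction: it is what makes the resolvents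
non-tautological, pairwise distinct and distinct from the untouched clauses.\<close>

lemma res_falsified:
  assumes D: "D \<in> N" and \<phi>: "models \<phi> (F - {D})" and z: "z \<in> res D"
  shows "\<not> lit_val \<phi> z"
proof
  assume "lit_val \<phi> z"
  moreover have "z \<notin> D"
    using unsat_remove_models_falsifies[OF unsat \<phi>] \<open>lit_val \<phi> z\<close> by blast
  moreover have "\<forall>C\<in>K. \<exists>y\<in>C. lit_val \<phi> y"
    using \<phi> D K_N_disjoint by blast
  ultimately have "satisfiable F"
    using satisfiable_if_K_and_C0_rest_true z by blast
  with unsat show False ..
qed

lemma clash_C0_N_only_p:
  assumes D: "D \<in> N" and "y \<in> C0" "comp y \<in> D"
  shows "y = p"
proof (rule ccontr)
  assume "y \<noteq> p"
  obtain \<phi> where \<phi>: "models \<phi> (F - {D})"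
    using minimally_unsat_remove_models[OF mu] D by blast
  have "\<not> lit_val \<phi> (comp y)"
    using unsat_remove_models_falsifies[OF unsat \<phi> \<open>comp y \<in> D\<close>] .
  moreover have "y \<in> res D"
    using \<open>y \<in> C0\<close> \<open>y \<noteq> p\<close> comp_p_notin_C0 by auto
  then have "\<not> lit_val \<phi> y"
    using res_falsified[OF D \<phi>] by blast
  ultimately show False
    by simp
qed

lemma clash_C0_N: assumes "D \<in> N" shows "C0 \<inter> comp_set D = {p}"
proof -
  have "p \<in> comp_set D"
    using assms by (simp add: mem_comp_set_iff)
  then show ?thesis
    using p_in_C0 clash_C0_N_only_p[OF assms] by (blast dest: iffD1[OF mem_comp_set_iff])
qed

lemma res_inj: "inj_on res N"
proof (rule inj_onI, rule ccontr)
  fix D1 D2 assume D1: "D1 \<in> N" and D2: "D2 \<in> N" and eq: "res D1 = res D2" and "D1 \<noteq> D2"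
  obtain \<phi> where \<phi>: "models \<phi> (F - {D1})"
    using minimally_unsat_remove_models[OF mu] D1 by blast
  then obtain z where z: "z \<in> D2" "lit_val \<phi> z"
    using D2 \<open>D1 \<noteq> D2\<close> by blast
  moreover have "\<not> lit_val \<phi> (comp p)"
    using unsat_remove_models_falsifies[OF unsat \<phi>] D1 by blast
  ultimately have "z \<in> res D2"
    using p_notin_N[OF D2] by auto
  then have "z \<in> res D1"
    by (simp only: eq)
  with res_falsified[OF D1 \<phi>] z show False
    by blast
qed

lemma res_notin_K: assumes D: "D \<in> N" shows "res D \<notin> K"
proof
  assume "res D \<in> K"
  obtain \<phi> where \<phi>: "models \<phi> (F - {D})"
    using minimally_unsat_remove_models[OF mu] D by blast
  have "res D \<noteq> D"
    using D by auto
  with \<open>res D \<in> K\<close> \<phi> obtain z where "z \<in> res D" "lit_val \<phi> z"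
    by blast
  with res_falsified[OF D \<phi>] show False
    by blast
qed

lemma DP_eq: "DP (var_of p) F = G"
proof -
  let ?resolvents = "{(C \<union> D) - {p, comp p} | C D. C \<in> F \<and> D \<in> F \<and> C \<inter> comp_set D = {p}}"
  have clash_iff: "C \<inter> comp_set D = {p} \<longleftrightarrow> C = C0 \<and> D \<in> N" if "C \<in> F" "D \<in> F" for C D
  proof
    assume "C \<inter> comp_set D = {p}"
    then have "p \<in> C" "comp p \<in> D"
      by (blast, metis IntE insertI1 mem_comp_set_iff)
    then show "C = C0 \<and> D \<in> N"
      using that eq_C0_if_p_in by blast
  qed (use clash_C0_N in blast)
  have "?resolvents = res ` N"
  proof (intro equalityI subsetI)
    fix X assume "X \<in> ?resolvents"
    then obtain C D where "X = (C \<union> D) - {p, comp p}" "C \<in> F" "D \<in> F" "C \<inter> comp_set D = {p}"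
      by blast
    with clash_iff show "X \<in> res ` N"
      by blast
  next
    fix X assume "X \<in> res ` N"
    then obtain D where "D \<in> N" "X = res D"
      by blast
    with clash_C0_N C0_in_F show "X \<in> ?resolvents"
      by blast
  qed
  then show ?thesis
    unfolding DP_lit by simp
qed

lemma res_clause: assumes D: "D \<in> N" shows "is_clause (res D)"
proof -
  have no_pair: False if "y \<in> C0" "comp y \<in> D" "y \<in> res D" for y
    using clash_C0_N_only_p[OF D that(1,2)] that(3) by blast
  have no_complementary: False if "y \<in> res D" "comp y \<in> res D" for y
  proof (cases "y \<in> C0")
    case True
    then have "comp y \<in> D"
      using that(2) clause_comp_notin[OF clause_F[OF C0_in_F]] by blast
    with True that(1) show False
      using no_pair by blast
  next
    case False
    then have "y \<in> D"
      using that(1) by blast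
    then have "comp y \<in> C0"
      using that(2) clause_comp_notin[OF clause_F[of D]] D by blast
    with \<open>y \<in> D\<close> that(2) show False
      using no_pair[of "comp y"] by simp
  qed
  then have "res D \<inter> comp_set (res D) = {}"
    by (blast dest: iffD1[OF mem_comp_set_iff])
  moreover have "finite (res D)"
    using clause_F[OF C0_in_F] clause_F[of D] D unfolding is_clause_def by auto
  ultimately show ?thesis
    unfolding is_clause_def by blast
qed

lemma res_true:
  assumes D: "D \<in> N" and "a \<in> C0" "lit_val \<phi> a" and "b \<in> D" "lit_val \<phi> b"
  shows "\<exists>z\<in>res D. lit_val \<phi> z"
proof (cases "a = p")
  case True
  then have "b \<noteq> comp p" "b \<noteq> p"
    using assms p_notin_N[OF D] by auto
  then show ?thesis
    using \<open>b \<in> D\<close> \<open>lit_val \<phi> b\<close> by blast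
next
  case False
  then show ?thesis
    using assms(2,3) comp_p_notin_C0 by blast
qed

lemma G_unsat: "\<not> satisfiable G"
proof
  assume "satisfiable G"
  then obtain \<phi> where \<phi>: "models \<phi> G"
    unfolding satisfiable_def by blast
  then have K_true: "\<forall>C\<in>K. \<exists>y\<in>C. lit_val \<phi> y"
    by blast
  show False
  proof (cases "\<forall>D\<in>N. \<exists>y\<in>D. y \<noteq> comp p \<and> lit_val \<phi> y")
    case True
    with K_true unsat satisfiable_if_K_and_N_rest_true show False
      by blast
  next
    case False
    then obtain D where D: "D \<in> N" and D_false: "\<forall>y\<in>D. y \<noteq> comp p \<longrightarrow> \<not> lit_val \<phi> y"
      by blast
    then obtain z where "z \<in> res D" "lit_val \<phi> z"
      using \<phi> by blast
    then have "z \<in> C0" "z \<noteq> p"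
      using D_false by auto
    with K_true \<open>lit_val \<phi> z\<close> unsat satisfiable_if_K_and_C0_rest_true show False
      by blast
  qed
qed

lemma models_G_remove:
  assumes \<phi>: "models \<phi> (F - {E})" and "E \<noteq> C0"
  shows "models \<phi> ((K - {E}) \<union> res ` (N - {E}))"
proof
  obtain a where a: "a \<in> C0" "lit_val \<phi> a"
    using \<phi> C0_in_F \<open>E \<noteq> C0\<close> by blast
  fix X assume "X \<in> (K - {E}) \<union> res ` (N - {E})"
  then show "\<exists>x\<in>X. lit_val \<phi> x"
  proof
    assume "X \<in> K - {E}"
    then show ?thesis
      using \<phi> by blast
  next
    assume "X \<in> res ` (N - {E})"
    then obtain D where D: "D \<in> N" "D \<noteq> E" and "X = res D"
      by blast
    moreover obtain b where "b \<in> D" "lit_val \<phi> b"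
      using \<phi> D by blast
    ultimately show ?thesis
      using res_true a by blast
  qed
qed

lemma G_remove_satisfiable: assumes "E \<in> G" shows "satisfiable (G - {E})"
proof -
  obtain D where "D \<in> F" "D \<noteq> C0" and sub: "G - {E} \<subseteq> (K - {D}) \<union> res ` (N - {D})"
  proof (cases "E \<in> K")
    case True
    have "E \<in> F" "E \<noteq> C0"
      using True C0_notin_K by auto
    moreover have "G - {E} \<subseteq> (K - {E}) \<union> res ` (N - {E})"
      using True K_N_disjoint by blast
    ultimately show ?thesis
      by (rule that)
  next
    case False
    then obtain D where D: "D \<in> N" "E = res D"
      using assms by blast
    have "D \<in> F" "D \<noteq> C0"
      using D(1) p_in_C0 p_notin_N by auto
    moreover have "G - {E} \<subseteq> (K - {D}) \<union> res ` (N - {D})"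
    proof
      fix X assume X: "X \<in> G - {E}"
      show "X \<in> (K - {D}) \<union> res ` (N - {D})"
      proof (cases "X \<in> K")
        case True
        with D(1) K_N_disjoint show ?thesis
          by blast
      next
        case False
        with X D(2) show ?thesis
          by blast
      qed
    qed
    ultimately show ?thesis
      by (rule that)
  qed
  then obtain \<phi> where "models \<phi> (F - {D})"
    using minimally_unsat_remove_models[OF mu] by blast
  with models_G_remove \<open>D \<noteq> C0\<close> have "models \<phi> ((K - {D}) \<union> res ` (N - {D}))"
    by blast
  with sub show ?thesis
    unfolding satisfiable_def by blast
qed

lemma G_minimally_unsat: "minimally_unsat G"
proof -
  have "finite G"
    using finite_F by simp
  then have "is_clause_set G"
    unfolding is_clause_set_def using clause_F res_clause by blast
  with G_unsat G_remove_satisfiable show ?thesis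
    unfolding minimally_unsat_def by blast
qed

lemma finite_vars_F: "finite (vars F)"
  using finite_F clause_F unfolding vars_def vars_cl_def is_clause_def by auto

lemma vars_G_subset: "vars G \<subseteq> vars F - {var_of p}"
proof
  fix w assume "w \<in> vars G"
  then obtain X z where X: "X \<in> G" "z \<in> X" and w: "w = var_of z"
    unfolding vars_def vars_cl_def by blast
  show "w \<in> vars F - {var_of p}"
  proof (cases "X \<in> K")
    case True
    then show ?thesis
      using X(2) w var_of_K var_of_in_vars[of X F z] by simp
  next
    case False
    then obtain D where D: "D \<in> N" and z: "z \<in> C0 \<or> z \<in> D" "z \<noteq> p" "z \<noteq> comp p"
      using X by blast
    have "var_of z \<noteq> var_of p"
      using z(2,3) by (simp add: var_of_eq_iff)
    moreover have "var_of z \<in> vars F"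
      using z(1) D C0_in_F var_of_in_vars by blast
    ultimately show ?thesis
      using w by simp
  qed
qed

lemma ld_G:
  assumes x: "var_of x \<noteq> var_of p"
  shows "ld G x = card {C\<in>K. x \<in> C} + (if x \<in> C0 then card N else card {D\<in>N. x \<in> D})"
proof -
  have "x \<noteq> p" "x \<noteq> comp p"
    using x by auto
  then have res_x: "{D\<in>N. x \<in> res D} = (if x \<in> C0 then N else {D\<in>N. x \<in> D})"
    by auto
  have "{C\<in>G. x \<in> C} = {C\<in>K. x \<in> C} \<union> res ` {D\<in>N. x \<in> res D}"
    by auto
  moreover have "{C\<in>K. x \<in> C} \<inter> res ` {D\<in>N. x \<in> res D} = {}"
    using res_notin_K by blast
  moreover have "inj_on res {D\<in>N. x \<in> res D}"
    using res_inj by (rule inj_on_subset) auto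
  ultimately have "ld G x = card {C\<in>K. x \<in> C} + card {D\<in>N. x \<in> res D}"
    unfolding ld_def using finite_F by (simp add: card_Un_disjoint card_image)
  then show ?thesis
    using res_x by (cases "x \<in> C0") simp_all
qed

lemma ld_F:
  assumes "var_of x \<noteq> var_of p"
  shows "ld F x = card {C\<in>K. x \<in> C} + (if x \<in> C0 then 1 else 0) + card {D\<in>N. x \<in> D}"
proof -
  let ?KN = "{C\<in>K. x \<in> C} \<union> {D\<in>N. x \<in> D}"
  have card_KN: "card ?KN = card {C\<in>K. x \<in> C} + card {D\<in>N. x \<in> D}"
    using finite_F K_N_disjoint by (intro card_Un_disjoint) auto
  have occ: "{C\<in>F. x \<in> C} = (if x \<in> C0 then insert C0 ?KN else ?KN)"
    using clause_cases C0_in_F by auto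
  then have ld_eq: "ld F x = card (if x \<in> C0 then insert C0 ?KN else ?KN)"
    unfolding ld_def by simp
  show ?thesis
  proof (cases "x \<in> C0")
    case True
    have "card (insert C0 ?KN) = Suc (card ?KN)"
      using C0_notin_K comp_p_notin_C0 finite_F by (intro card_insert_disjoint) auto
    moreover have "ld F x = card (insert C0 ?KN)"
      using ld_eq True by (simp only: if_True)
    ultimately show ?thesis
      using card_KN True by simp
  next
    case False
    then have "ld F x = card ?KN"
      using ld_eq by (simp only: if_False)
    then show ?thesis
      using card_KN False by simp
  qed
qed

lemma vdeg_F_var_p: "vdeg F (var_of p) = 1 + card N"
proof -
  have "ld F p = 1"
    unfolding ld_def occurrences_p by simp
  moreover have "ld F (comp p) = card N"
    unfolding ld_def ..
  ultimately show ?thesis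
    unfolding vdeg_def by (cases p) auto
qed

text \<open>If \<open>x \<in> C\<^sub>0\<close> lies in every clause of \<open>N\<close>, then \<open>\<not>x\<close> occurs (by minimal
unsatisfiability) but not in \<open>C\<^sub>0\<close> or \<open>N\<close>, hence in a surviving clause of \<open>K\<close>.\<close>

lemma ld_G_lit_pair:
  assumes x: "var_of x \<noteq> var_of p" and "comp x \<notin> C0"
  shows "min (ld F x + ld F (comp x)) (1 + card N) \<le> ld G x + ld G (comp x)"
proof -
  have ld_comp: "ld G (comp x) = ld F (comp x)"
    using ld_G[of "comp x"] ld_F[of "comp x"] x \<open>comp x \<notin> C0\<close> by simp
  show ?thesis
  proof (cases "x \<in> C0 \<and> {D\<in>N. x \<in> D} = N")
    case True
    obtain C' where C': "C' \<in> F" "comp x \<in> C'"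
      using minimally_unsat_comp_occurs[OF mu C0_in_F] True by blast
    have "C' \<notin> N"
      using True C' clause_comp_notin[OF clause_F] by blast
    then have "C' \<in> {C\<in>K. comp x \<in> C}"
      using clause_cases[OF C'(1)] C' \<open>comp x \<notin> C0\<close> by blast
    then have "1 \<le> card {C\<in>K. comp x \<in> C}"
      using finite_F by (simp add: Suc_le_eq card_gt_0_iff) blast
    then have "1 \<le> ld G (comp x)"
      using ld_G[of "comp x"] x by simp
    moreover have "card N \<le> ld G x"
      using ld_G[OF x] True by simp
    ultimately show ?thesis
      by simp
  next
    case False
    have "ld F x \<le> ld G x"
    proof (cases "x \<in> C0")
      case True
      with False have "{D\<in>N. x \<in> D} \<subset> N"
        by blast
      then have "card {D\<in>N. x \<in> D} < card N"
        using finite_F by (intro psubset_card_mono) auto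
      with True show ?thesis
        using ld_G[OF x] ld_F[OF x] by simp
    next
      case False
      then show ?thesis
        using ld_G[OF x] ld_F[OF x] by simp
    qed
    with ld_comp show ?thesis
      by simp
  qed
qed

lemma vdeg_G_ge:
  assumes "w \<in> vars G"
  shows "min (vdeg F w) (vdeg F (var_of p)) \<le> vdeg G w"
proof -
  have w: "var_of (Pos w) \<noteq> var_of p"
    using assms vars_G_subset by auto
  have "Neg w \<notin> C0 \<or> Pos w \<notin> C0"
    using clause_comp_notin[OF clause_F[OF C0_in_F], of "Pos w"] by auto
  then show ?thesis
  proof
    assume "Neg w \<notin> C0"
    then show ?thesis
      using ld_G_lit_pair[of "Pos w"] w vdeg_F_var_p unfolding vdeg_def by simp
  next
    assume "Pos w \<notin> C0"
    then show ?thesis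
      using ld_G_lit_pair[of "Neg w"] w vdeg_F_var_p unfolding vdeg_def by (simp add: add.commute)
  qed
qed

lemma minvdeg_G: "minvdeg F \<le> minvdeg G"
proof (cases "vars G = {}")
  case False
  have p_var: "var_of p \<in> vars F"
    using var_of_in_vars[OF C0_in_F p_in_C0] .
  have "Min (vdeg F ` vars F) \<le> vdeg G w" if "w \<in> vars G" for w
  proof -
    have "w \<in> vars F"
      using that vars_G_subset by blast
    then have "Min (vdeg F ` vars F) \<le> min (vdeg F w) (vdeg F (var_of p))"
      using p_var finite_vars_F by simp
    with vdeg_G_ge[OF that] show ?thesis
      by linarith
  qed
  moreover have "finite (vars G)"
    using vars_G_subset finite_vars_F by (meson finite_Diff finite_subset)
  ultimately have "Min (vdeg F ` vars F) \<le> Min (vdeg G ` vars G)"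
    using False by simp
  with False p_var show ?thesis
    unfolding minvdeg_def by auto
qed (simp add: minvdeg_def)

end

lemma sDP_step_singular_lit:
  assumes "minimally_unsat F" and "sDP_step F F'"
  obtains C0 p where "singular_lit F C0 p" and "F' = DP (var_of p) F"
proof -
  obtain v where v: "singular F v" "F' = DP v F"
    using assms(2) unfolding sDP_step_def by blast
  then have "ld F (Pos v) = 1 \<or> ld F (Neg v) = 1"
    unfolding singular_def by (auto simp: min_def split: if_splits)
  then obtain p where p: "var_of p = v" "ld F p = 1"
    by (meson var_of.simps)
  obtain C0 where "{C\<in>F. p \<in> C} = {C0}"
    using p(2) unfolding ld_def by (rule card_1_singletonE)
  with assms(1) have "singular_lit F C0 p"
    by unfold_locales
  with that v p show ?thesis
    by blast
qed

lemma sDP_step_minimally_unsat_minvdeg: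
  assumes "minimally_unsat F" and "sDP_step F F'"
  shows "minimally_unsat F'" and "minvdeg F \<le> minvdeg F'"
proof -
  obtain C0 p where "singular_lit F C0 p" and F': "F' = DP (var_of p) F"
    using sDP_step_singular_lit[OF assms] .
  then interpret singular_lit F C0 p
    by simp
  show "minimally_unsat F'" and "minvdeg F \<le> minvdeg F'"
    unfolding F' DP_eq using G_minimally_unsat minvdeg_G by simp_all
qed

lemma rtranclp_sDP_step_minimally_unsat_minvdeg:
  assumes "sDP_step\<^sup>*\<^sup>* F F'" and "minimally_unsat F"
  shows "minimally_unsat F' \<and> minvdeg F \<le> minvdeg F'"
  using assms
proof (induction rule: rtranclp_induct)
  case (step G G')
  then have "minimally_unsat G" "minvdeg F \<le> minvdeg G"
    by simp_all
  with sDP_step_minimally_unsat_minvdeg[OF _ \<open>sDP_step G G'\<close>] show ?case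
    by (blast intro: order_trans)
qed simp

theorem lemma5p4:
  fixes F F' :: "'v cls"
  assumes "minimally_unsat F" and "minimally_unsat F'"
    and "sDP_step\<^sup>*\<^sup>* F F'"
  shows "minvdeg F' \<ge> minvdeg F"
  using rtranclp_sDP_step_minimally_unsat_minvdeg[OF assms(3,1)] by blast

end
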